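(* Let $I = \{i_1 < \cdots < i_k\} \subset [n-1]$, $0 \leq m \leq n$ and $r \geq 0$. Then $\partial_{e_r(x_1, \ldots, x_{n-m})}\, \mathrm{d}_{i_1} \cdots \mathrm{d}_{i_k} \Delta_n$ equals the sum of the weights of all marked $n$-staircases with exactly $m$ grey columns, exactly $r$ marks $\circ$, and exactly $k$ columns containing $\times$'s, the numbers of $\times$'s in these columns being $i_1, \ldots, i_k$ in some order.
   Context: Work in $\mathbb{Q}[x_1, \ldots, x_n, \theta_1, \ldots, \theta_n]$ ($x$'s commute, $\theta$'s anticommute, $x_i\theta_j = \theta_j x_i$). $\Delta_n = \prod_{i<j}(x_j - x_i)$; $\partial_g$ substitutes $\partial_{x_i}$ for $x_i$ in $g$; $\mathrm{d}_i \omega = \sum_{j=1}^n \theta_j \partial_{x_j}^i \omega$; $e_r(x_1,\ldots,x_p)$ is the elementary symmetric polynomial ($e_0 = 1$, $e_r = 0$ for $r > p$). An $n$-staircase is a sequence $(h_1, \ldots, h_n)$ that is a permutation of $\{0, 1, \ldots, n-1\}$, pictured as $n$ bottom-justified columns where column $\ell$ has cells at heights $1, \ldots, h_\ell$. A marked $n$-staircase with $m$ grey columns consists of an $n$-staircase together with integers $a_\ell \geq 0$ and $b_\ell \in \{0,1\}$ for each column $\ell$, with $a_\ell + b_\ell \leq h_\ell$ and $b_\ell = 0$ for the last $m$ columns $\ell > n-m$ (the grey columns); column $\ell$ has $\times$'s in its top $a_\ell$ cells (heights $h_\ell - a_\ell + 1, \ldots, h_\ell$) and, if $b_\ell = 1$,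 an $\circ$ in the cell at height $h_\ell - a_\ell$. Let $c_1 < \cdots < c_p$ be the columns with $a_{c} > 0$. The weight of the marked staircase is the product of: the monomial $x_1^{h_1 - a_1 - b_1} \cdots x_n^{h_n - a_n - b_n} \theta_{c_1} \cdots \theta_{c_p}$; the sign $(-1)^{\#\{i<j : h_i > h_j\}} \operatorname{sgn} \prod_{1 \leq v < w \leq p}(a_{c_w} - a_{c_v})$ (where $\operatorname{sgn}$ is the signum function, so this is $0$ if two $a_{c_v}$ coincide); and the order, which is the product of the heights of all cells containing a $\times$ or an $\circ$. *)

theory Defs
  imports Complex_Main "HOL-Library.Poly_Mapping" "HOL-Library.Multiset"
begin

text \<open>Polynomials in commuting variables x_1, x_2, ... over Q: finitely supported
  maps from exponent vectors exponent vectors to rat.  Variables are indexed by positive naturals.\<close>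
type_synonym xpoly = "(nat \<Rightarrow>\<^sub>0 nat) \<Rightarrow>\<^sub>0 rat"

text \<open>Superpolynomials in Q[x_1..,theta_1..]: every element is uniquely
  sum over finite S of theta_S * f_S(x), where theta_S = theta_{s_1} ... theta_{s_p} for
  s_1 < ... < s_p the elements of S.  We store the map S \<mapsto> f_S.\<close>
type_synonym spoly = "nat set \<Rightarrow> xpoly"

definition X :: "nat \<Rightarrow> xpoly" where
  "X j = Poly_Mapping.single (Poly_Mapping.single j 1) 1"

definition xderiv :: "nat \<Rightarrow> xpoly \<Rightarrow> xpoly" where
  "xderiv j f = Abs_poly_mapping
     (\<lambda>(e :: nat \<Rightarrow>\<^sub>0 nat). of_nat (Poly_Mapping.lookup e j + 1) * Poly_Mapping.lookup f (e + Poly_Mapping.single j (1::nat)))"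

definition xdiff_mono :: "(nat \<Rightarrow>\<^sub>0 nat) \<Rightarrow> xpoly \<Rightarrow> xpoly" where
  "xdiff_mono \<alpha> = foldr (\<lambda>j h. (xderiv j ^^ Poly_Mapping.lookup \<alpha> j) \<circ> h)
                        (sorted_list_of_set (Poly_Mapping.keys \<alpha>)) id"

definition xdiff_op :: "xpoly \<Rightarrow> xpoly \<Rightarrow> xpoly" where
  "xdiff_op g f = (\<Sum>\<alpha>\<in>Poly_Mapping.keys g. Poly_Mapping.single 0 (Poly_Mapping.lookup g \<alpha>) * xdiff_mono \<alpha> f)"

definition sdiff_op :: "xpoly \<Rightarrow> spoly \<Rightarrow> spoly" where
  "sdiff_op g \<omega> = (\<lambda>S. xdiff_op g (\<omega> S))"

definition esym :: "nat \<Rightarrow> nat \<Rightarrow> xpoly" where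
  "esym r p = (\<Sum>S\<in>{S. S \<subseteq> {1..p} \<and> card S = r}. \<Prod>s\<in>S. X s)"

definition Delta :: "nat \<Rightarrow> xpoly" where
  "Delta n = (\<Prod>(i,j)\<in>{(i,j). 1 \<le> i \<and> i < j \<and> j \<le> n}. X j - X i)"

definition xpart :: "xpoly \<Rightarrow> spoly" where
  "xpart f = (\<lambda>S. if S = {} then f else 0)"

text \<open>Left multiplication by theta_j:
  theta_j theta_T = (-1)^{#{t\<in>T. t<j}} theta_{T \<union> {j}} if j \<notin> T, and 0 otherwise.\<close>
definition theta_mult :: "nat \<Rightarrow> spoly \<Rightarrow> spoly" where
  "theta_mult j \<omega> = (\<lambda>S. if j \<in> S
        then (-1) ^ card {s\<in>S. s < j} * \<omega> (S - {j}) else 0)"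

definition dop :: "nat \<Rightarrow> nat \<Rightarrow> spoly \<Rightarrow> spoly" where
  "dop n i \<omega> = (\<lambda>S. \<Sum>j\<in>{1..n}. theta_mult j (\<lambda>T. (xderiv j ^^ i) (\<omega> T)) S)"

text \<open>Marked n-staircases with m grey columns, encoded as (h, a, b) with columns 1..n;
  all three functions are 0 outside {1..n}.\<close>
definition marked_staircases :: "nat \<Rightarrow> nat \<Rightarrow> ((nat \<Rightarrow> nat) \<times> (nat \<Rightarrow> nat) \<times> (nat \<Rightarrow> nat)) set" where
  "marked_staircases n m = {(h, a, b).
      bij_betw h {1..n} {0..<n} \<and>
      (\<forall>l. l \<notin> {1..n} \<longrightarrow> h l = 0 \<and> a l = 0 \<and> b l = 0) \<and>
      (\<forall>l\<in>{1..n}. b l \<le> 1 \<and> a l + b l \<le> h l \<and> (l > n - m \<longrightarrow> b l = 0))}"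

definition xcols :: "nat \<Rightarrow> (nat \<Rightarrow> nat) \<Rightarrow> nat set" where
  "xcols n a = {l\<in>{1..n}. a l > 0}"

definition inversions :: "nat \<Rightarrow> (nat \<Rightarrow> nat) \<Rightarrow> nat" where
  "inversions n h = card {(i,j). 1 \<le> i \<and> i < j \<and> j \<le> n \<and> h i > h j}"

definition stair_sign :: "nat \<Rightarrow> (nat \<Rightarrow> nat) \<Rightarrow> (nat \<Rightarrow> nat) \<Rightarrow> int" where
  "stair_sign n h a = (-1) ^ inversions n h *
     sgn (\<Prod>(v,w)\<in>{(v,w). v \<in> xcols n a \<and> w \<in> xcols n a \<and> v < w}. int (a w) - int (a v))"

text \<open>Order: product of the heights of the cells carrying a cross or a circle,
  i.e. heights h-a-b+1, ..., h in each column.\<close>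
definition stair_order :: "nat \<Rightarrow> (nat \<Rightarrow> nat) \<Rightarrow> (nat \<Rightarrow> nat) \<Rightarrow> (nat \<Rightarrow> nat) \<Rightarrow> nat" where
  "stair_order n h a b = (\<Prod>l\<in>{1..n}. \<Prod>t\<in>{h l - a l - b l <.. h l}. t)"

definition stair_weight :: "nat \<Rightarrow> ((nat \<Rightarrow> nat) \<times> (nat \<Rightarrow> nat) \<times> (nat \<Rightarrow> nat)) \<Rightarrow> spoly" where
  "stair_weight n M = (case M of (h, a, b) \<Rightarrow>
     (\<lambda>S. if S = xcols n a then
        of_int (stair_sign n h a * int (stair_order n h a b)) *
        (\<Prod>l\<in>{1..n}. X l ^ (h l - a l - b l))
      else 0))"

end

theory Submission
  imports Defs "Jordan_Normal_Form.Determinant"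
begin

(* Expanding the Vandermonde determinant writes Delta_n as the signed sum of the monomials
   x_1^h_1 ... x_n^h_n over all n-staircases h, the sign being (-1)^(number of inversions of h).
   The operator d_i replaces x_j^h_j by theta_j times its i-th derivative: it puts i crosses on top
   of column j and multiplies by the heights h_j (h_j - 1) ... (h_j - i + 1) of the crossed cells.
   In d_i_1 ... d_i_k Delta_n the operators act in the order d_i_k, ..., d_i_1, so every new cross
   count is smaller than all earlier ones; moving theta_j past the theta's of the crossed columns to
   its left therefore produces exactly the sign of the new factors of prod (a_w - a_v).
   Finally the derivation by e_r(x_1, ..., x_(n-m)) is the sum of the square-free derivations by
   x_T over the r-subsets T of the white columns, and differentiating x_j^(h_j - a_j) once puts a
   circle directly below the crosses of column j, contributing its height h_j - a_j. *)

section \<open>Signs of permutations and inversions\<close>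

definition inversion_set :: "(nat \<Rightarrow> nat) \<Rightarrow> nat \<Rightarrow> (nat \<times> nat) set" where
  "inversion_set p n = {(i, j). i < j \<and> j < n \<and> p j < p i}"

lemma finite_inversion_set: "finite (inversion_set p n)"
  by (rule finite_subset[of _ "{0..<n} \<times> {0..<n}"]) (auto simp: inversion_set_def)

lemma permutes_ascending_imp_id:
  assumes p: "p permutes {0..<n}" and asc: "\<And>k. Suc k < n \<Longrightarrow> p k < p (Suc k)"
  shows "p = id"
proof -
  have ge: "i \<le> p i" if "i < n" for i
    using that
  proof (induction i)
    case (Suc i)
    then show ?case using asc[of i] by simp
  qed simp
  have sums: "(\<Sum>i\<in>{0..<n}. p i) = (\<Sum>i\<in>{0..<n}. i)"
    using sum.reindex[OF permutes_inj_on[OF p, of "{0..<n}"], of id] permutes_image[OF p] by simp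
  have fixed: "p i = i" if "i < n" for i
  proof (rule ccontr)
    assume "p i \<noteq> i"
    then have "(\<Sum>i\<in>{0..<n}. i) < (\<Sum>i\<in>{0..<n}. p i)"
      using ge that by (intro sum_strict_mono_ex1) (auto intro!: bexI[of _ i] simp: le_neq_implies_less)
    with sums show False by simp
  qed
  show ?thesis
  proof
    fix i show "p i = id i" using fixed permutes_not_in[OF p, of i] by (cases "i < n") auto
  qed
qed

lemma permutes_adjacent_descent:
  assumes p: "p permutes {0..<n}" and "p \<noteq> id"
  obtains k where "Suc k < n" and "p (Suc k) < p k"
proof -
  have "\<exists>k. Suc k < n \<and> p (Suc k) < p k"
  proof (rule ccontr)
    assume no_descent: "\<nexists>k. Suc k < n \<and> p (Suc k) < p k"
    have "p k < p (Suc k)" if "Suc k < n" for k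
    proof -
      have "p k \<noteq> p (Suc k)" using permutes_inj[OF p] by (simp add: inj_eq)
      moreover have "\<not> p (Suc k) < p k" using no_descent that by blast
      ultimately show ?thesis by simp
    qed
    then have "p = id" by (rule permutes_ascending_imp_id[OF p])
    with \<open>p \<noteq> id\<close> show False ..
  qed
  then show ?thesis using that by blast
qed

lemma transpose_Suc_less_iff:
  "Transposition.transpose k (Suc k) i < Transposition.transpose k (Suc k) j \<longleftrightarrow>
     i < j \<and> (i, j) \<noteq> (k, Suc k) \<or> (i, j) = (Suc k, k)"
  by (auto simp: Transposition.transpose_def)

lemma transpose_Suc_less_bound:
  "Suc k < n \<Longrightarrow> Transposition.transpose k (Suc k) j < n \<longleftrightarrow> j < n"
  by (auto simp: Transposition.transpose_def)

lemma inversion_set_swap: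
  fixes k :: nat
  defines "t \<equiv> Transposition.transpose k (Suc k)"
  assumes k: "Suc k < n" and descent: "p (Suc k) < p k"
  shows "inversion_set (p \<circ> t) n = map_prod t t ` (inversion_set p n - {(k, Suc k)})"
proof -
  have t_t: "t (t i) = i" for i
    by (simp add: t_def)
  have key: "(i, j) \<in> inversion_set (p \<circ> t) n \<longleftrightarrow> (t i, t j) \<in> inversion_set p n - {(k, Suc k)}" for i j
    using k descent unfolding t_def inversion_set_def
    by (auto simp: transpose_Suc_less_iff transpose_Suc_less_bound transpose_eq_iff)
  show ?thesis
  proof (intro equalityI subsetI)
    fix x assume "x \<in> inversion_set (p \<circ> t) n"
    then have "map_prod t t x \<in> inversion_set p n - {(k, Suc k)}" using key by (cases x) auto
    moreover have "x = map_prod t t (map_prod t t x)" by (cases x) (simp add: t_t)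
    ultimately show "x \<in> map_prod t t ` (inversion_set p n - {(k, Suc k)})" by blast
  next
    fix x assume "x \<in> map_prod t t ` (inversion_set p n - {(k, Suc k)})"
    then obtain i j where "(i, j) \<in> inversion_set p n - {(k, Suc k)}" "x = (t i, t j)" by auto
    then show "x \<in> inversion_set (p \<circ> t) n" using key[of "t i" "t j"] by (simp add: t_t)
  qed
qed

lemma sign_eq_inversions:
  assumes "p permutes {0..<n}"
  shows "sign p = (-1::int) ^ card (inversion_set p n)"
  using assms
proof (induction "card (inversion_set p n)" arbitrary: p)
  case 0
  then have "inversion_set p n = {}" using finite_inversion_set by simp
  then have "p = id"
    using permutes_adjacent_descent[OF 0(2)] by (auto simp: inversion_set_def)
  then show ?case using 0(1) by simp
next
  case (Suc N)
  have "p \<noteq> id"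
  proof
    assume "p = id"
    then have "inversion_set p n = {}" by (auto simp: inversion_set_def)
    with Suc(2) show False by simp
  qed
  then obtain k where k: "Suc k < n" "p (Suc k) < p k"
    using permutes_adjacent_descent[OF Suc(3)] by blast
  let ?t = "Transposition.transpose k (Suc k)"
  have perm: "p \<circ> ?t permutes {0..<n}"
    using Suc(3) k by (intro permutes_compose permutes_swap_id) auto
  have "card (inversion_set (p \<circ> ?t) n) = card (inversion_set p n - {(k, Suc k)})"
    unfolding inversion_set_swap[OF k]
    by (rule card_image) (auto simp: inj_on_def transpose_eq_iff)
  also have "\<dots> = N" using Suc(2) k finite_inversion_set unfolding inversion_set_def by simp
  finally have "sign (p \<circ> ?t) = (-1) ^ N" using Suc(1) perm by simp
  moreover have "sign (p \<circ> ?t) = sign p * sign ?t"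
    by (rule sign_compose) (use Suc(3) in \<open>auto intro: permutes_imp_permutation permutation_swap_id\<close>)
  ultimately show ?case by (simp add: sign_swap_id flip: Suc(2))
qed

section \<open>The Vandermonde determinant\<close>

definition vandermonde_mat :: "'a::comm_ring_1 list \<Rightarrow> 'a mat" where
  "vandermonde_mat xs = mat (length xs) (length xs) (\<lambda>(i, j). xs ! j ^ i)"

lemma det_lower_triangular_diag:
  assumes "A \<in> carrier_mat n n" and "\<And>i j. i < j \<Longrightarrow> j < n \<Longrightarrow> A $$ (i, j) = 0"
  shows "det A = (\<Prod>i<n. A $$ (i, i))"
  using det_lower_triangular[OF _ assms(1)] assms by (simp add: prod.list_conv_set_nth diag_mat_def atLeast0LessThan)

(* Left multiplication by row_reduction_mat n x subtracts x times each row from the next one. *)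
definition row_reduction_mat :: "nat \<Rightarrow> 'a::comm_ring_1 \<Rightarrow> 'a mat" where
  "row_reduction_mat n x = mat n n (\<lambda>(i, j). (if j = i then 1 else 0) - (if 0 < i \<and> j = i - 1 then x else 0))"

lemma det_row_reduction_mat: "det (row_reduction_mat n x) = 1"
proof -
  have "det (row_reduction_mat n x) = (\<Prod>i<n. row_reduction_mat n x $$ (i, i))"
    by (rule det_lower_triangular_diag) (auto simp: row_reduction_mat_def)
  also have "\<dots> = 1" by (rule prod.neutral) (auto simp: row_reduction_mat_def)
  finally show ?thesis .
qed

lemma row_reduction_mat_mult_vandermonde:
  assumes "i < Suc (length ys)" and "j < Suc (length ys)"
  shows "(row_reduction_mat (Suc (length ys)) x * vandermonde_mat (x # ys)) $$ (i, j) =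
    (x # ys) ! j ^ i - (if 0 < i then x * (x # ys) ! j ^ (i - 1) else 0)"
proof -
  define n where "n = Suc (length ys)"
  define A where "A = vandermonde_mat (x # ys)"
  have ij: "i < n" "j < n" using assms by (simp_all add: n_def)
  have "(row_reduction_mat n x * A) $$ (i, j) = (\<Sum>l\<in>{0..<n}. row_reduction_mat n x $$ (i, l) * A $$ (l, j))"
    using ij by (simp add: n_def A_def row_reduction_mat_def vandermonde_mat_def scalar_prod_def)
  also have "\<dots> = (\<Sum>l\<in>{0..<n}. (if l = i then A $$ (l, j) else 0) - (if 0 < i \<and> l = i - 1 then x * A $$ (l, j) else 0))"
    by (rule sum.cong) (use ij in \<open>auto simp: row_reduction_mat_def algebra_simps\<close>)
  also have "\<dots> = A $$ (i, j) - (if 0 < i then x * A $$ (i - 1, j) else 0)"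
    using ij by (simp add: sum_subtractf)
  finally show ?thesis using ij by (simp add: n_def A_def vandermonde_mat_def)
qed

lemma det_vandermonde_mat_Cons_eq:
  fixes x :: "'a::comm_ring_1" and ys :: "'a list"
  defines "k \<equiv> length ys"
  shows "det (vandermonde_mat (x # ys)) = det (mat k k (\<lambda>(i, j). ys ! j ^ i * (ys ! j - x)))"
proof -
  define B where "B = row_reduction_mat (Suc k) x * vandermonde_mat (x # ys)"
  have R: "row_reduction_mat (Suc k) x \<in> carrier_mat (Suc k) (Suc k)"
    by (simp add: row_reduction_mat_def)
  have V: "vandermonde_mat (x # ys) \<in> carrier_mat (Suc k) (Suc k)"
    by (simp add: vandermonde_mat_def k_def)
  have B: "B \<in> carrier_mat (Suc k) (Suc k)"
    unfolding B_def using R V by simp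
  have det_B: "det B = det (vandermonde_mat (x # ys))"
    unfolding B_def det_mult[OF R V] det_row_reduction_mat by simp
  have B_entry: "B $$ (i, j) = (x # ys) ! j ^ i - (if 0 < i then x * (x # ys) ! j ^ (i - 1) else 0)"
    if "i < Suc k" "j < Suc k" for i j
    unfolding B_def k_def by (rule row_reduction_mat_mult_vandermonde) (use that in \<open>simp_all add: k_def\<close>)
  have B_col0: "B $$ (i, 0) = (if i = 0 then 1 else 0)" if "i < Suc k" for i
    using B_entry[OF that] by (cases i) auto
  have "det B = (\<Sum>i<Suc k. B $$ (i, 0) * cofactor B i 0)"
    by (rule laplace_expansion_column[OF B]) simp
  also have "\<dots> = (\<Sum>i<Suc k. if i = 0 then cofactor B i 0 else 0)"
    by (rule sum.cong) (auto simp: B_col0)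
  also have "\<dots> = det (mat_delete B 0 0)" by (simp add: cofactor_def)
  also have "mat_delete B 0 0 = mat k k (\<lambda>(i, j). ys ! j ^ i * (ys ! j - x))"
  proof (rule eq_matI)
    fix i j assume "i < dim_row (mat k k (\<lambda>(i, j). ys ! j ^ i * (ys ! j - x)))"
      "j < dim_col (mat k k (\<lambda>(i, j). ys ! j ^ i * (ys ! j - x)))"
    then have ij: "i < k" "j < k" by auto
    have "mat_delete B 0 0 $$ (i, j) = B $$ (Suc i, Suc j)"
      unfolding mat_delete_def using B ij by simp
    then show "mat_delete B 0 0 $$ (i, j) = mat k k (\<lambda>(i, j). ys ! j ^ i * (ys ! j - x)) $$ (i, j)"
      using B_entry[of "Suc i" "Suc j"] ij by (simp add: algebra_simps)
  qed (use B in auto)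
  finally show ?thesis using det_B by simp
qed

lemma pairs_less_Suc:
  "{(i, j). i < j \<and> j < Suc k} =
     (\<lambda>j. (0::nat, Suc j)) ` {..<k} \<union> map_prod Suc Suc ` {(i, j). i < j \<and> j < k}"
proof (intro equalityI subsetI)
  fix x assume "x \<in> {(i, j). i < j \<and> j < Suc k}"
  then obtain i j where x: "x = (i, Suc j)" "i < Suc j" "j < k"
    by (auto simp: less_Suc_eq_0_disj)
  then show "x \<in> (\<lambda>j. (0, Suc j)) ` {..<k} \<union> map_prod Suc Suc ` {(i, j). i < j \<and> j < k}"
    by (cases i) auto
qed auto

lemma det_vandermonde_mat:
  "det (vandermonde_mat xs) = (\<Prod>(i, j)\<in>{(i, j). i < j \<and> j < length xs}. xs ! j - xs ! i)"
proof (induction xs)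
  case Nil
  show ?case by (simp add: vandermonde_mat_def det_def)
next
  case (Cons x ys)
  define k where "k = length ys"
  define D where "D = mat k k (\<lambda>(i, j). if i = j then ys ! j - x else 0)"
  have V: "vandermonde_mat ys \<in> carrier_mat k k" by (simp add: vandermonde_mat_def k_def)
  have D: "D \<in> carrier_mat k k" by (simp add: D_def)
  have det_D: "det D = (\<Prod>j<k. ys ! j - x)"
    by (subst det_lower_triangular_diag[OF D]) (auto simp: D_def)
  have "mat k k (\<lambda>(i, j). ys ! j ^ i * (ys ! j - x)) = vandermonde_mat ys * D"
  proof (rule eq_matI)
    fix i j assume "i < dim_row (vandermonde_mat ys * D)" "j < dim_col (vandermonde_mat ys * D)"
    then have ij: "i < k" "j < k" using V D by auto
    have "(vandermonde_mat ys * D) $$ (i, j) = (\<Sum>l\<in>{0..<k}. vandermonde_mat ys $$ (i, l) * D $$ (l, j))"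
      using ij V D by (simp add: scalar_prod_def)
    also have "\<dots> = (\<Sum>l\<in>{0..<k}. if l = j then ys ! j ^ i * (ys ! j - x) else 0)"
      by (rule sum.cong) (use ij in \<open>auto simp: D_def vandermonde_mat_def k_def\<close>)
    finally show "mat k k (\<lambda>(i, j). ys ! j ^ i * (ys ! j - x)) $$ (i, j) = (vandermonde_mat ys * D) $$ (i, j)"
      using ij by simp
  qed (use V D in auto)
  then have "det (vandermonde_mat (x # ys)) = det (vandermonde_mat ys * D)"
    by (simp add: det_vandermonde_mat_Cons_eq k_def)
  also have "\<dots> = (\<Prod>j<k. ys ! j - x) * det (vandermonde_mat ys)"
    by (simp add: det_mult[OF V D] det_D)
  also have "\<dots> = (\<Prod>(i, j)\<in>{(i, j). i < j \<and> j < length (x # ys)}. (x # ys) ! j - (x # ys) ! i)"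
  proof -
    have fin: "finite {(i, j). i < j \<and> j < k}"
      by (rule finite_subset[of _ "{..<k} \<times> {..<k}"]) auto
    show ?thesis
      unfolding Cons.IH length_Cons k_def[symmetric] pairs_less_Suc
      by (subst prod.union_disjoint) (use fin in \<open>auto simp: prod.reindex inj_on_def case_prod_beta\<close>)
  qed
  finally show ?case .
qed

section \<open>Monomials and the expansion of the Vandermonde product\<close>

definition staircases :: "nat \<Rightarrow> (nat \<Rightarrow> nat) set" where
  "staircases n = {h. bij_betw h {1..n} {0..<n} \<and> (\<forall>l. l \<notin> {1..n} \<longrightarrow> h l = 0)}"

definition mono_exp :: "nat \<Rightarrow> (nat \<Rightarrow> nat) \<Rightarrow> (nat \<Rightarrow>\<^sub>0 nat)" where
  "mono_exp n g = (\<Sum>l\<in>{1..n}. Poly_Mapping.single l (g l))"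

definition set_exp :: "nat set \<Rightarrow> (nat \<Rightarrow>\<^sub>0 nat)" where
  "set_exp T = (\<Sum>s\<in>T. Poly_Mapping.single s 1)"

lemma lookup_mono_exp: "Poly_Mapping.lookup (mono_exp n g) j = (if j \<in> {1..n} then g j else 0)"
  unfolding mono_exp_def lookup_sum by (simp add: lookup_single when_def)

lemma lookup_set_exp: "finite T \<Longrightarrow> Poly_Mapping.lookup (set_exp T) j = (if j \<in> T then 1 else 0)"
  unfolding set_exp_def lookup_sum by (simp add: lookup_single when_def)

lemma keys_set_exp: "finite T \<Longrightarrow> Poly_Mapping.keys (set_exp T) = T"
  by (auto simp: in_keys_iff lookup_set_exp split: if_splits)

lemma inj_on_set_exp: "inj_on set_exp {T. finite T}"
  by (rule inj_onI) (metis keys_set_exp mem_Collect_eq)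

lemma prod_single:
  "(\<Prod>l\<in>A. Poly_Mapping.single (f l) (c l :: 'b::comm_semiring_1))
     = Poly_Mapping.single (\<Sum>l\<in>A. f l :: 'a::comm_monoid_add) (\<Prod>l\<in>A. c l)"
  by (induction A rule: infinite_finite_induct) (auto simp: mult_single)

lemma X_power: "X l ^ k = Poly_Mapping.single (Poly_Mapping.single l k) 1"
  by (induction k) (simp_all add: X_def mult_single flip: single_add)

lemma prod_X_power: "(\<Prod>l\<in>{1..n}. X l ^ g l) = Poly_Mapping.single (mono_exp n g) 1"
  unfolding X_power mono_exp_def by (simp add: prod_single)

lemma prod_X: "(\<Prod>s\<in>T. X s) = Poly_Mapping.single (set_exp T) 1"
  unfolding X_def set_exp_def by (simp add: prod_single)

lemma of_int_mult_single: "of_int k * Poly_Mapping.single e (c::rat) = Poly_Mapping.single e (of_int k * c)"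
  by (metis add_0 mult_single single_of_int)

lemma Delta_eq_det: "Delta n = det (vandermonde_mat (map X [1..<Suc n]))"
proof -
  have "det (vandermonde_mat (map X [1..<Suc n])) = (\<Prod>(i, j)\<in>{(i, j). i < j \<and> j < n}. X (Suc j) - X (Suc i))"
    unfolding det_vandermonde_mat by (rule prod.cong) (auto simp del: upt_Suc)
  also have "\<dots> = Delta n" unfolding Delta_def
    by (rule prod.reindex_bij_witness[of _ "map_prod (\<lambda>i. i - 1) (\<lambda>j. j - 1)" "map_prod Suc Suc"]) auto
  finally show ?thesis by simp
qed

definition stair_of_perm :: "nat \<Rightarrow> (nat \<Rightarrow> nat) \<Rightarrow> nat \<Rightarrow> nat" where
  "stair_of_perm n p l = (if l \<in> {1..n} then p (l - 1) else 0)"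

lemma stair_of_perm_in_staircases:
  assumes p: "p permutes {0..<n}"
  shows "stair_of_perm n p \<in> staircases n"
proof -
  have "bij_betw (\<lambda>l. l - 1) {1..n} {0..<n}"
    by (rule bij_betw_byWitness[where f' = Suc]) auto
  then have "bij_betw (p \<circ> (\<lambda>l. l - 1)) {1..n} {0..<n}"
    using permutes_imp_bij[OF p] by (rule bij_betw_trans)
  then have "bij_betw (stair_of_perm n p) {1..n} {0..<n}"
    by (rule bij_betw_cong[THEN iffD1, rotated]) (simp add: stair_of_perm_def)
  then show ?thesis
    unfolding staircases_def stair_of_perm_def by simp
qed

lemma staircase_shift_permutes:
  assumes "h \<in> staircases n"
  shows "(\<lambda>i. if i < n then h (Suc i) else i) permutes {0..<n}"
proof -
  have h: "bij_betw h {1..n} {0..<n}" using assms unfolding staircases_def by simp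
  have "bij_betw Suc {0..<n} {1..n}"
    by (rule bij_betw_byWitness[where f' = "\<lambda>l. l - 1"]) auto
  then have "bij_betw (h \<circ> Suc) {0..<n} {0..<n}" using h by (rule bij_betw_trans)
  then have "bij_betw (\<lambda>i. if i < n then h (Suc i) else i) {0..<n} {0..<n}"
    by (rule bij_betw_cong[THEN iffD1, rotated]) simp
  then show ?thesis
    by (rule bij_imp_permutes) simp
qed

lemma bij_betw_stair_of_perm: "bij_betw (stair_of_perm n) {p. p permutes {0..<n}} (staircases n)"
proof (rule bij_betw_byWitness[where f' = "\<lambda>h i. if i < n then h (Suc i) else i"])
  show "\<forall>p\<in>{p. p permutes {0..<n}}. (\<lambda>i. if i < n then stair_of_perm n p (Suc i) else i) = p"
  proof
    fix p assume "p \<in> {p. p permutes {0..<n}}"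
    then have "p i = i" if "n \<le> i" for i
      using that by (simp add: permutes_not_in)
    then show "(\<lambda>i. if i < n then stair_of_perm n p (Suc i) else i) = p"
      by (auto simp: fun_eq_iff stair_of_perm_def)
  qed
  show "\<forall>h\<in>staircases n. stair_of_perm n (\<lambda>i. if i < n then h (Suc i) else i) = h"
  proof
    fix h assume "h \<in> staircases n"
    then have "h l = 0" if "l \<notin> {1..n}" for l
      using that by (simp add: staircases_def)
    then show "stair_of_perm n (\<lambda>i. if i < n then h (Suc i) else i) = h"
      by (auto simp: fun_eq_iff stair_of_perm_def)
  qed
  show "stair_of_perm n ` {p. p permutes {0..<n}} \<subseteq> staircases n"
    using stair_of_perm_in_staircases by blast
  show "(\<lambda>h i. if i < n then h (Suc i) else i) ` staircases n \<subseteq> {p. p permutes {0..<n}}"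
    using staircase_shift_permutes by blast
qed

lemma inversions_stair_of_perm: "inversions n (stair_of_perm n p) = card (inversion_set p n)"
proof -
  have "{(i, j). 1 \<le> i \<and> i < j \<and> j \<le> n \<and> stair_of_perm n p j < stair_of_perm n p i}
      = map_prod Suc Suc ` inversion_set p n"
  proof (intro equalityI subsetI)
    fix x assume "x \<in> {(i, j). 1 \<le> i \<and> i < j \<and> j \<le> n \<and> stair_of_perm n p j < stair_of_perm n p i}"
    then obtain i j where "x = (i, j)" "1 \<le> i" "i < j" "j \<le> n" "p (j - 1) < p (i - 1)"
      by (auto simp: stair_of_perm_def)
    then have "x = map_prod Suc Suc (i - 1, j - 1)" "(i - 1, j - 1) \<in> inversion_set p n"
      unfolding inversion_set_def by auto
    then show "x \<in> map_prod Suc Suc ` inversion_set p n" by blast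
  qed (auto simp: inversion_set_def stair_of_perm_def)
  moreover have "inj_on (map_prod Suc Suc) (inversion_set p n)" by (auto simp: inj_on_def)
  ultimately show ?thesis
    unfolding inversions_def by (simp add: card_image)
qed

lemma Delta_eq_sum_staircases:
  "Delta n = (\<Sum>h\<in>staircases n. Poly_Mapping.single (mono_exp n h) (of_int ((-1) ^ inversions n h)))"
proof -
  let ?V = "vandermonde_mat (map X [1..<Suc n])"
  have V: "?V \<in> carrier_mat n n" by (simp add: vandermonde_mat_def del: upt_Suc)
  have "Delta n = det (transpose_mat ?V)"
    unfolding Delta_eq_det det_transpose[OF V] ..
  also have "transpose_mat ?V = mat n n (\<lambda>(i, j). X (Suc i) ^ j)"
    by (rule eq_matI) (auto simp: vandermonde_mat_def simp del: upt_Suc)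
  also have "det (mat n n (\<lambda>(i, j). X (Suc i) ^ j)) =
      (\<Sum>p\<in>{p. p permutes {0..<n}}. signof p * (\<Prod>i=0..<n. X (Suc i) ^ p i))"
    by (subst det_def'[of _ n]) auto
  also have "\<dots> = (\<Sum>p\<in>{p. p permutes {0..<n}}.
      Poly_Mapping.single (mono_exp n (stair_of_perm n p)) (of_int ((-1) ^ inversions n (stair_of_perm n p))))"
  proof (rule sum.cong[OF refl])
    fix p assume p: "p \<in> {p. p permutes {0..<n}}"
    have "(\<Prod>i=0..<n. X (Suc i) ^ p i) = Poly_Mapping.single (mono_exp n (stair_of_perm n p)) 1"
      unfolding prod_X_power[symmetric]
      by (rule prod.reindex_bij_witness[of _ "\<lambda>l. l - 1" Suc]) (auto simp: stair_of_perm_def)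
    moreover have "sign p = (-1) ^ inversions n (stair_of_perm n p)"
      using p by (simp add: sign_eq_inversions inversions_stair_of_perm)
    ultimately show "signof p * (\<Prod>i=0..<n. X (Suc i) ^ p i) =
        Poly_Mapping.single (mono_exp n (stair_of_perm n p)) (of_int ((-1) ^ inversions n (stair_of_perm n p)))"
      by (simp only: of_int_mult_single mult_1_right)
  qed
  also have "\<dots> = (\<Sum>h\<in>staircases n. Poly_Mapping.single (mono_exp n h) (of_int ((-1) ^ inversions n h)))"
    by (rule sum.reindex_bij_betw[OF bij_betw_stair_of_perm])
  finally show ?thesis .
qed

section \<open>Derivatives of monomials\<close>

lemma lookup_xderiv:
  "Poly_Mapping.lookup (xderiv j f) e =
     of_nat (Poly_Mapping.lookup e j + 1) * Poly_Mapping.lookup f (e + Poly_Mapping.single j 1)"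
proof -
  have "{e. Poly_Mapping.lookup f (e + Poly_Mapping.single j 1) \<noteq> 0}
      = (\<lambda>e. e + Poly_Mapping.single j 1) -` {k. Poly_Mapping.lookup f k \<noteq> 0}"
    by auto
  moreover have "finite \<dots>"
    by (rule finite_vimageI) (auto simp: inj_on_def)
  ultimately have "finite {e. of_nat (Poly_Mapping.lookup e j + 1) *
      Poly_Mapping.lookup f (e + Poly_Mapping.single j (1::nat)) \<noteq> (0::rat)}"
    by (auto elim: finite_subset[rotated])
  then show ?thesis unfolding xderiv_def by simp
qed

lemma additive_xderiv: "additive (xderiv j)"
  by unfold_locales (rule poly_mapping_eqI, simp add: lookup_xderiv lookup_add algebra_simps)

lemma additive_funpow:
  fixes f :: "'a::ab_group_add \<Rightarrow> 'a"
  assumes "additive f"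
  shows "additive (f ^^ k)"
  by (induction k) (use assms in \<open>simp_all add: additive_def\<close>)

lemma additive_xdiff_mono: "additive (xdiff_mono \<alpha>)"
proof -
  have "additive (foldr (\<lambda>j h. (xderiv j ^^ k j) \<circ> h) L id)" for k L
    by (induction L) (simp_all add: additive_def additive.add[OF additive_funpow[OF additive_xderiv]])
  then show ?thesis unfolding xdiff_mono_def .
qed

lemma xderiv_single:
  "xderiv j (Poly_Mapping.single e c) =
     Poly_Mapping.single (e - Poly_Mapping.single j 1) (of_nat (Poly_Mapping.lookup e j) * c)"
proof (rule poly_mapping_eqI)
  fix e'
  show "Poly_Mapping.lookup (xderiv j (Poly_Mapping.single e c)) e' =
        Poly_Mapping.lookup (Poly_Mapping.single (e - Poly_Mapping.single j 1) (of_nat (Poly_Mapping.lookup e j) * c)) e'"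
  proof (cases "Poly_Mapping.lookup e j = 0")
    case True
    then have "e' + Poly_Mapping.single j 1 \<noteq> e"
      by (metis add_eq_0_iff_both_eq_0 lookup_add lookup_single_eq one_neq_zero)
    then show ?thesis using True by (simp add: lookup_xderiv lookup_single when_def)
  next
    case False
    then have "e' + Poly_Mapping.single j 1 = e \<longleftrightarrow> e - Poly_Mapping.single j 1 = e'"
      by (auto simp: poly_mapping_eq_iff fun_eq_iff lookup_add lookup_minus lookup_single when_def)
    moreover have "e - Poly_Mapping.single j 1 = e' \<Longrightarrow> Poly_Mapping.lookup e' j + 1 = Poly_Mapping.lookup e j"
      using False by (auto simp: lookup_minus)
    ultimately show ?thesis by (auto simp: lookup_xderiv lookup_single when_def)
  qed
qed

definition falling :: "nat \<Rightarrow> nat \<Rightarrow> nat" where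
  "falling x i = (\<Prod>t<i. x - t)"

lemma falling_Suc: "falling x (Suc i) = (x - i) * falling x i"
  by (simp add: falling_def)

lemma falling_eq_0: "x < i \<Longrightarrow> falling x i = 0"
  unfolding falling_def by (rule prod_zero) auto

lemma falling_eq_prod: "i \<le> x \<Longrightarrow> falling x i = (\<Prod>t\<in>{x - i<..x}. t)"
  unfolding falling_def by (rule prod.reindex_bij_witness[of _ "\<lambda>t. x - t" "\<lambda>t. x - t"]) auto

lemma funpow_xderiv_single:
  "(xderiv j ^^ i) (Poly_Mapping.single e c) =
     Poly_Mapping.single (e - Poly_Mapping.single j i) (of_nat (falling (Poly_Mapping.lookup e j) i) * c)"
proof (induction i)
  case (Suc i)
  have "e - Poly_Mapping.single j i - Poly_Mapping.single j 1 = e - Poly_Mapping.single j (Suc i)"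
    by (rule poly_mapping_eqI) (simp add: lookup_minus lookup_single when_def)
  then show ?case
    by (simp add: Suc xderiv_single lookup_minus falling_Suc flip: mult.assoc)
qed (simp add: falling_def)

lemma foldr_xderiv_single:
  assumes "distinct L" and "\<And>j. j \<in> set L \<Longrightarrow> k j = 1"
  shows "foldr (\<lambda>j h. (xderiv j ^^ k j) \<circ> h) L id (Poly_Mapping.single e c) =
    Poly_Mapping.single (e - set_exp (set L)) (of_nat (\<Prod>s\<in>set L. Poly_Mapping.lookup e s) * c)"
  using assms
proof (induction L)
  case Nil
  then show ?case by (simp add: set_exp_def)
next
  case (Cons j L)
  have "Poly_Mapping.lookup (e - set_exp (set L)) j = Poly_Mapping.lookup e j"
    using Cons.prems by (simp add: lookup_minus lookup_set_exp)
  moreover have "e - set_exp (set L) - Poly_Mapping.single j 1 = e - set_exp (set (j # L))"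
    using Cons.prems
    by (intro poly_mapping_eqI) (auto simp: lookup_minus lookup_set_exp lookup_single when_def)
  ultimately show ?case using Cons by (simp add: xderiv_single mult.assoc)
qed

lemma xdiff_mono_set_exp_single:
  assumes "finite T"
  shows "xdiff_mono (set_exp T) (Poly_Mapping.single e c) =
    Poly_Mapping.single (e - set_exp T) (of_nat (\<Prod>s\<in>T. Poly_Mapping.lookup e s) * c)"
  unfolding xdiff_mono_def keys_set_exp[OF assms]
  using foldr_xderiv_single[of "sorted_list_of_set T" "Poly_Mapping.lookup (set_exp T)"] assms
  by (simp add: lookup_set_exp)

lemma lookup_sum_single_1:
  "finite A \<Longrightarrow>
    Poly_Mapping.lookup (\<Sum>\<alpha>\<in>A. Poly_Mapping.single \<alpha> (1::'b::{comm_monoid_add,one})) \<beta> =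
    (if \<beta> \<in> A then 1 else 0)"
  by (simp add: lookup_sum lookup_single when_def)

lemma xdiff_op_esym:
  "xdiff_op (esym r p) f = (\<Sum>T\<in>{T. T \<subseteq> {1..p} \<and> card T = r}. xdiff_mono (set_exp T) f)"
proof -
  let ?C = "{T. T \<subseteq> {1..p} \<and> card T = r}"
  have fin: "finite ?C" by (rule finite_subset[of _ "Pow {1..p}"]) auto
  have inj: "inj_on set_exp ?C"
    by (rule inj_on_subset[OF inj_on_set_exp]) (auto intro: finite_subset)
  have esym: "esym r p = (\<Sum>\<alpha>\<in>set_exp ` ?C. Poly_Mapping.single \<alpha> 1)"
    unfolding esym_def sum.reindex[OF inj] by (simp add: prod_X)
  have lookup_esym: "Poly_Mapping.lookup (esym r p) \<alpha> = (if \<alpha> \<in> set_exp ` ?C then 1 else 0)" for \<alpha>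
    unfolding esym using fin by (simp add: lookup_sum_single_1)
  then have "Poly_Mapping.keys (esym r p) = set_exp ` ?C"
    by (auto simp: in_keys_iff split: if_splits)
  then have "xdiff_op (esym r p) f = (\<Sum>\<alpha>\<in>set_exp ` ?C. xdiff_mono \<alpha> f)"
    unfolding xdiff_op_def by (simp add: lookup_esym)
  also have "\<dots> = (\<Sum>T\<in>?C. xdiff_mono (set_exp T) f)"
    using sum.reindex[OF inj, of "\<lambda>\<alpha>. xdiff_mono \<alpha> f"] by simp
  finally show ?thesis .
qed

section \<open>Staircases with crosses\<close>

lemma sgn_prod: "sgn (\<Prod>x\<in>A. f x) = (\<Prod>x\<in>A. sgn (f x :: 'a::linordered_idom))"
  by (induction A rule: infinite_finite_induct) (auto simp: sgn_mult)

definition ordered_pairs :: "nat set \<Rightarrow> (nat \<times> nat) set" where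
  "ordered_pairs S = {(v, w). v \<in> S \<and> w \<in> S \<and> v < w}"

definition cross_sign :: "nat set \<Rightarrow> (nat \<Rightarrow> nat) \<Rightarrow> int" where
  "cross_sign S a = sgn (\<Prod>(v, w)\<in>ordered_pairs S. int (a w) - int (a v))"

lemma finite_ordered_pairs: "finite S \<Longrightarrow> finite (ordered_pairs S)"
  unfolding ordered_pairs_def by (rule finite_subset[of _ "S \<times> S"]) auto

lemma cross_sign_cong: "(\<And>v. v \<in> S \<Longrightarrow> a v = a' v) \<Longrightarrow> cross_sign S a = cross_sign S a'"
  unfolding cross_sign_def ordered_pairs_def by (intro arg_cong[where f = sgn] prod.cong) auto

lemma cross_sign_remove_min:
  assumes S: "finite S" and j: "j \<in> S" and min: "\<And>v. v \<in> S - {j} \<Longrightarrow> a j < a v"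
  shows "cross_sign S a = (-1) ^ card {v\<in>S. v < j} * cross_sign (S - {j}) a"
proof -
  let ?f = "\<lambda>(v, w). int (a w) - int (a v)"
  let ?P = "ordered_pairs (S - {j})" and ?L = "(\<lambda>v. (v, j)) ` {v\<in>S. v < j}" and ?R = "Pair j ` {w\<in>S. j < w}"
  have pairs_split: "ordered_pairs S = ?P \<union> ?L \<union> ?R"
    using j unfolding ordered_pairs_def by auto
  have fin: "finite ?P" using S by (simp add: finite_ordered_pairs)
  have "prod ?f (ordered_pairs S) = prod ?f ?P * prod ?f ?L * prod ?f ?R"
    unfolding pairs_split using S fin
    by (subst prod.union_disjoint, simp_all, fastforce simp: ordered_pairs_def)
       (subst prod.union_disjoint, auto simp: ordered_pairs_def)
  moreover have "prod ?f ?L = (\<Prod>v\<in>{v\<in>S. v < j}. int (a j) - int (a v))"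
    by (simp add: prod.reindex inj_on_def)
  moreover have "prod ?f ?R = (\<Prod>w\<in>{w\<in>S. j < w}. int (a w) - int (a j))"
    by (simp add: prod.reindex inj_on_def)
  ultimately have "prod ?f (ordered_pairs S) = prod ?f ?P *
      (\<Prod>v\<in>{v\<in>S. v < j}. int (a j) - int (a v)) * (\<Prod>w\<in>{w\<in>S. j < w}. int (a w) - int (a j))"
    by simp
  moreover have "sgn (\<Prod>v\<in>{v\<in>S. v < j}. int (a j) - int (a v)) = (-1) ^ card {v\<in>S. v < j}"
    using min by (simp add: sgn_prod)
  moreover have "sgn (\<Prod>w\<in>{w\<in>S. j < w}. int (a w) - int (a j)) = 1"
    using min by (simp add: sgn_prod)
  ultimately show ?thesis unfolding cross_sign_def by (simp add: sgn_mult)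
qed

definition crossed_staircases ::
    "nat \<Rightarrow> nat list \<Rightarrow> nat set \<Rightarrow> ((nat \<Rightarrow> nat) \<times> (nat \<Rightarrow> nat)) set" where
  "crossed_staircases n L S = {(h, a). h \<in> staircases n \<and> (\<forall>l. l \<notin> {1..n} \<longrightarrow> a l = 0) \<and>
      xcols n a = S \<and> inj_on a S \<and> a ` S = set L}"

definition cross_coeff :: "nat \<Rightarrow> (nat \<Rightarrow> nat) \<Rightarrow> (nat \<Rightarrow> nat) \<Rightarrow> int" where
  "cross_coeff n h a =
     (-1) ^ inversions n h * cross_sign (xcols n a) a * int (\<Prod>l\<in>{1..n}. falling (h l) (a l))"

definition cross_poly :: "nat \<Rightarrow> nat list \<Rightarrow> nat set \<Rightarrow> xpoly" where
  "cross_poly n L S = (\<Sum>(h, a)\<in>crossed_staircases n L S.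
     Poly_Mapping.single (mono_exp n (\<lambda>l. h l - a l)) (of_int (cross_coeff n h a)))"

lemma finite_xcols: "finite (xcols n a)"
  unfolding xcols_def by simp

lemma finite_staircases: "finite (staircases n)"
proof -
  have "staircases n \<subseteq> {f. \<forall>x. (x \<in> {1..n} \<longrightarrow> f x \<in> {0..<n}) \<and> (x \<notin> {1..n} \<longrightarrow> f x = 0)}"
    unfolding staircases_def by (auto dest: bij_betwE)
  then show ?thesis by (rule finite_subset) (rule finite_set_of_finite_funs, auto)
qed

lemma finite_crossed_staircases: "finite (crossed_staircases n L S)"
proof -
  have "crossed_staircases n L S \<subseteq> staircases n \<times>
      {f. \<forall>x. (x \<in> {1..n} \<longrightarrow> f x \<in> insert 0 (set L)) \<and> (x \<notin> {1..n} \<longrightarrow> f x = 0)}"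
    unfolding crossed_staircases_def xcols_def by auto
  then show ?thesis
    by (rule finite_subset) (intro finite_cartesian_product finite_staircases finite_set_of_finite_funs, auto)
qed

lemma crossed_staircases_Nil:
  "crossed_staircases n [] S = (if S = {} then (\<lambda>h. (h, \<lambda>_. 0)) ` staircases n else {})"
proof -
  have "a = (\<lambda>_. 0)" if "\<forall>l. l \<notin> {1..n} \<longrightarrow> a l = 0" "xcols n a = {}" for a :: "nat \<Rightarrow> nat"
  proof
    fix l show "a l = 0" using that unfolding xcols_def by (cases "l \<in> {1..n}") auto
  qed
  then show ?thesis
    unfolding crossed_staircases_def by (auto simp: xcols_def)
qed

lemma cross_poly_Nil: "cross_poly n [] = xpart (Delta n)"
proof
  fix S
  have "cross_poly n [] {} = Delta n"
    unfolding cross_poly_def crossed_staircases_Nil Delta_eq_sum_staircases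
    by (simp add: sum.reindex inj_on_def cross_coeff_def cross_sign_def ordered_pairs_def xcols_def falling_def)
  then show "cross_poly n [] S = xpart (Delta n) S"
    unfolding xpart_def by (simp add: cross_poly_def crossed_staircases_Nil)
qed

lemma crossed_staircases_free:
  "(h, a) \<in> crossed_staircases n L T \<Longrightarrow> j \<notin> T \<Longrightarrow> a j = 0"
  unfolding crossed_staircases_def xcols_def by (cases "j \<in> {1..n}") auto

lemma crossed_staircases_add_cross:
  assumes ha: "(h, a) \<in> crossed_staircases n L (S - {j})" and j: "j \<in> S" "j \<in> {1..n}"
    and i: "0 < i" "\<forall>x\<in>set L. i < x"
  shows "(h, a(j := i)) \<in> crossed_staircases n (i # L) S"
proof -
  have h: "h \<in> staircases n" and out: "\<forall>l. l \<notin> {1..n} \<longrightarrow> a l = 0"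
    and xc: "xcols n a = S - {j}" and inj: "inj_on a (S - {j})" and im: "a ` (S - {j}) = set L"
    using ha unfolding crossed_staircases_def by auto
  have "xcols n (a(j := i)) = S"
    using xc j i(1) unfolding xcols_def by auto
  moreover have "i \<notin> a ` (S - {j})" using im i(2) by auto
  then have "inj_on (a(j := i)) S"
    using inj j(1) by (auto simp: inj_on_def)
  moreover have "(a(j := i)) ` S = set (i # L)"
    using im j(1) by (auto simp: image_iff)
  ultimately show ?thesis
    unfolding crossed_staircases_def using h out j(2) by auto
qed

lemma cross_coeff_add_cross:
  assumes ha: "(h, a) \<in> crossed_staircases n L (S - {j})" and j: "j \<in> S" "j \<in> {1..n}"
    and i: "0 < i" "\<forall>x\<in>set L. i < x"
  shows "cross_coeff n h (a(j := i)) = (-1) ^ card {s\<in>S. s < j} * int (falling (h j) i) * cross_coeff n h a"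
proof -
  have xc: "xcols n a = S - {j}" and im: "a ` (S - {j}) = set L"
    using ha unfolding crossed_staircases_def by auto
  have a_j: "a j = 0" using crossed_staircases_free[OF ha] by simp
  have xc': "xcols n (a(j := i)) = S"
    using crossed_staircases_add_cross[OF assms] unfolding crossed_staircases_def by simp
  have "cross_sign S (a(j := i)) = (-1) ^ card {s\<in>S. s < j} * cross_sign (S - {j}) (a(j := i))"
    using im i(2) xc' j(1) by (intro cross_sign_remove_min) (auto simp: finite_xcols[of n "a(j := i)", unfolded xc'])
  also have "cross_sign (S - {j}) (a(j := i)) = cross_sign (S - {j}) a"
    by (rule cross_sign_cong) simp
  finally have sign: "cross_sign S (a(j := i)) = (-1) ^ card {s\<in>S. s < j} * cross_sign (S - {j}) a" .
  have "(\<Prod>l\<in>{1..n}. falling (h l) ((a(j := i)) l)) = falling (h j) i * (\<Prod>l\<in>{1..n} - {j}. falling (h l) (a l))"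
    using j(2) by (simp add: prod.remove)
  also have "\<dots> = falling (h j) i * (\<Prod>l\<in>{1..n}. falling (h l) (a l))"
    using j(2) a_j by (simp add: prod.remove falling_def)
  finally show ?thesis
    unfolding cross_coeff_def xc xc' sign by (simp add: algebra_simps)
qed

lemma crossed_staircases_remove_cross:
  assumes ha: "(h, a) \<in> crossed_staircases n (i # L) S" and "distinct (i # L)"
    and j: "j \<in> S" "a j = i"
  shows "j \<in> {1..n}" and "(h, a(j := 0)) \<in> crossed_staircases n L (S - {j})"
proof -
  have h: "h \<in> staircases n" and out: "\<forall>l. l \<notin> {1..n} \<longrightarrow> a l = 0" and xc: "xcols n a = S"
    and inj: "inj_on a S" and im: "a ` S = set (i # L)"
    using ha unfolding crossed_staircases_def by auto
  show "j \<in> {1..n}" using j(1) xc unfolding xcols_def by auto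
  have "xcols n (a(j := 0)) = S - {j}" using xc unfolding xcols_def by auto
  moreover have "inj_on (a(j := 0)) (S - {j})"
    using inj by (auto simp: inj_on_def)
  moreover have "(a(j := 0)) ` (S - {j}) = a ` S - {a j}"
    using inj j(1) by (auto simp: inj_on_def)
  then have "(a(j := 0)) ` (S - {j}) = set L"
    using im j(2) \<open>distinct (i # L)\<close> by auto
  ultimately show "(h, a(j := 0)) \<in> crossed_staircases n L (S - {j})"
    unfolding crossed_staircases_def using h out by auto
qed

lemma crossed_staircases_unique_cross:
  assumes "(h, a) \<in> crossed_staircases n (i # L) S"
  shows "\<exists>!j. j \<in> S \<and> a j = i"
proof -
  have inj: "inj_on a S" and im: "a ` S = set (i # L)"
    using assms unfolding crossed_staircases_def by auto
  obtain j where j: "j \<in> S" "a j = i"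
    using im by (metis imageE list.set_intros(1))
  moreover have "j' = j" if "j' \<in> S" "a j' = i" for j'
    using inj_onD[OF inj _ that(1) j(1)] that j by simp
  ultimately show ?thesis by blast
qed

lemma bij_betw_add_cross:
  assumes i: "0 < i" "\<forall>x\<in>set L. i < x" and L: "distinct L"
  shows "bij_betw (\<lambda>(j, h, a). (h, a(j := i)))
           (SIGMA j:S \<inter> {1..n}. crossed_staircases n L (S - {j})) (crossed_staircases n (i # L) S)"
proof -
  define cross_col where "cross_col a = (THE j. j \<in> S \<and> a j = i)" for a :: "nat \<Rightarrow> nat"
  have iL: "distinct (i # L)" using i L by auto
  have cross_col: "cross_col a \<in> S \<and> a (cross_col a) = i" if "(h, a) \<in> crossed_staircases n (i # L) S" for h a
    unfolding cross_col_def by (rule theI'[OF crossed_staircases_unique_cross[OF that]])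
  show ?thesis
  proof (rule bij_betw_byWitness[where f' = "\<lambda>(h, a). (cross_col a, h, a(cross_col a := 0))"])
    show "\<forall>x\<in>SIGMA j:S \<inter> {1..n}. crossed_staircases n L (S - {j}).
        (\<lambda>(h, a). (cross_col a, h, a(cross_col a := 0))) ((\<lambda>(j, h, a). (h, a(j := i))) x) = x"
    proof
      fix x assume "x \<in> (SIGMA j:S \<inter> {1..n}. crossed_staircases n L (S - {j}))"
      then obtain j h a where x: "x = (j, h, a)" and j: "j \<in> S" "j \<in> {1..n}"
        and ha: "(h, a) \<in> crossed_staircases n L (S - {j})" by auto
      have "cross_col (a(j := i)) = j"
        unfolding cross_col_def
        using crossed_staircases_unique_cross[OF crossed_staircases_add_cross[OF ha j i]] j
        by (intro the1_equality) auto
      then show "(\<lambda>(h, a). (cross_col a, h, a(cross_col a := 0))) ((\<lambda>(j, h, a). (h, a(j := i))) x) = x"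
        using x crossed_staircases_free[OF ha] by auto
    qed
    show "\<forall>y\<in>crossed_staircases n (i # L) S.
        (\<lambda>(j, h, a). (h, a(j := i))) ((\<lambda>(h, a). (cross_col a, h, a(cross_col a := 0))) y) = y"
      using cross_col by (auto simp: fun_upd_idem_iff)
    show "(\<lambda>(j, h, a). (h, a(j := i))) ` (SIGMA j:S \<inter> {1..n}. crossed_staircases n L (S - {j}))
        \<subseteq> crossed_staircases n (i # L) S"
      using crossed_staircases_add_cross[OF _ _ _ i] by auto
    show "(\<lambda>(h, a). (cross_col a, h, a(cross_col a := 0))) ` crossed_staircases n (i # L) S
        \<subseteq> (SIGMA j:S \<inter> {1..n}. crossed_staircases n L (S - {j}))"
      using cross_col crossed_staircases_remove_cross[OF _ iL] by fastforce
  qed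
qed

lemma neg_one_power_mult_single:
  "(-1) ^ k * Poly_Mapping.single e c = Poly_Mapping.single e ((-1) ^ k * (c::rat))"
  using of_int_mult_single[of "(-1) ^ k" e c] by simp

lemma add_cross_term:
  assumes ha: "(h, a) \<in> crossed_staircases n L (S - {j})" and j: "j \<in> S" "j \<in> {1..n}"
    and i: "0 < i" "\<forall>x\<in>set L. i < x"
  shows "(-1) ^ card {s\<in>S. s < j} *
      (xderiv j ^^ i) (Poly_Mapping.single (mono_exp n (\<lambda>l. h l - a l)) (of_int (cross_coeff n h a)))
    = Poly_Mapping.single (mono_exp n (\<lambda>l. h l - (a(j := i)) l)) (of_int (cross_coeff n h (a(j := i))))"
proof -
  have a_j: "a j = 0" using crossed_staircases_free[OF ha] by simp
  have coeff: "of_int (cross_coeff n h (a(j := i))) =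
      (-1) ^ card {s\<in>S. s < j} * (of_nat (falling (h j) i) * (of_int (cross_coeff n h a) :: rat))"
    unfolding cross_coeff_add_cross[OF assms] by simp
  show ?thesis
  proof (cases "i \<le> h j")
    case True
    have "mono_exp n (\<lambda>l. h l - a l) - Poly_Mapping.single j i = mono_exp n (\<lambda>l. h l - (a(j := i)) l)"
      by (rule poly_mapping_eqI) (use j a_j True in \<open>auto simp: lookup_minus lookup_mono_exp lookup_single when_def\<close>)
    then show ?thesis
      using j a_j by (simp add: funpow_xderiv_single lookup_mono_exp neg_one_power_mult_single coeff)
  next
    case False
    then show ?thesis
      using j a_j by (simp add: funpow_xderiv_single lookup_mono_exp neg_one_power_mult_single coeff falling_eq_0)
  qed
qed

lemma dop_cross_poly:
  assumes i: "0 < i" "\<forall>x\<in>set L. i < x" and L: "distinct L"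
  shows "dop n i (cross_poly n L) = cross_poly n (i # L)"
proof
  fix S
  let ?term = "\<lambda>(j, h, a). (-1) ^ card {s\<in>S. s < j} *
      (xderiv j ^^ i) (Poly_Mapping.single (mono_exp n (\<lambda>l. h l - a l)) (of_int (cross_coeff n h a)))"
  have "dop n i (cross_poly n L) S =
      (\<Sum>j\<in>S \<inter> {1..n}. (-1) ^ card {s\<in>S. s < j} * (xderiv j ^^ i) (cross_poly n L (S - {j})))"
    unfolding dop_def theta_mult_def Int_commute[of S] sum.inter_restrict[OF finite_atLeastAtMost] ..
  also have "\<dots> = (\<Sum>j\<in>S \<inter> {1..n}. \<Sum>(h, a)\<in>crossed_staircases n L (S - {j}). ?term (j, h, a))"
    unfolding cross_poly_def additive.sum[OF additive_funpow[OF additive_xderiv]] sum_distrib_left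
    by (simp add: case_prod_beta)
  also have "\<dots> = (\<Sum>x\<in>(SIGMA j:S \<inter> {1..n}. crossed_staircases n L (S - {j})). ?term x)"
    by (subst sum.Sigma) (auto simp: finite_crossed_staircases)
  also have "\<dots> = (\<Sum>(j, h, a)\<in>(SIGMA j:S \<inter> {1..n}. crossed_staircases n L (S - {j})).
      Poly_Mapping.single (mono_exp n (\<lambda>l. h l - (a(j := i)) l)) (of_int (cross_coeff n h (a(j := i)))))"
    by (rule sum.cong) (auto simp: add_cross_term[OF _ _ _ i])
  also have "\<dots> = cross_poly n (i # L) S"
    unfolding cross_poly_def
    by (subst sum.reindex_bij_betw[OF bij_betw_add_cross[OF i L], symmetric]) (auto intro!: sum.cong)
  finally show "dop n i (cross_poly n L) S = cross_poly n (i # L) S" .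
qed

lemma foldr_dop_Delta:
  assumes "sorted_wrt (<) L" and "\<forall>x\<in>set L. 0 < x"
  shows "foldr (dop n) L (xpart (Delta n)) = cross_poly n L"
  using assms
proof (induction L)
  case Nil
  then show ?case by (simp add: cross_poly_Nil)
next
  case (Cons i L)
  then show ?case by (simp add: dop_cross_poly strict_sorted_iff)
qed

section \<open>Staircases with crosses and circles\<close>

lemma image_mset_mset_set_eq_iff:
  assumes S: "finite S" and I: "finite I"
  shows "image_mset a (mset_set S) = mset_set I \<longleftrightarrow> inj_on a S \<and> a ` S = I"
proof
  assume eq: "image_mset a (mset_set S) = mset_set I"
  then have im: "a ` S = I"
    using S I by (metis finite_set_mset_mset_set set_image_mset)
  have "card S = card I"
    using arg_cong[OF eq, of size] by simp
  then have "inj_on a S" using S im by (simp add: eq_card_imp_inj_on)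
  then show "inj_on a S \<and> a ` S = I" using im by simp
next
  assume "inj_on a S \<and> a ` S = I"
  then show "image_mset a (mset_set S) = mset_set I" by (simp add: image_mset_mset_set)
qed

lemma finite_marked_staircases: "finite (marked_staircases n m)"
proof -
  let ?F = "\<lambda>B. {f. \<forall>x. (x \<in> {1..n} \<longrightarrow> f x \<in> B) \<and> (x \<notin> {1..n} \<longrightarrow> f x = (0::nat))}"
  have "h l < n" if "bij_betw h {1..n} {0..<n}" "l \<in> {1..n}" for h l
    using bij_betwE[OF that(1)] that(2) by auto
  then have "marked_staircases n m \<subseteq> ?F {0..<n} \<times> ?F {0..<n} \<times> ?F {0..1}"
    unfolding marked_staircases_def by fastforce
  then show ?thesis
    by (rule finite_subset) (intro finite_cartesian_product finite_set_of_finite_funs; simp)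
qed

lemma stair_order_circles:
  assumes fits: "\<forall>l\<in>{1..n}. a l + of_bool (l \<in> T) \<le> h l" and T: "T \<subseteq> {1..n}"
  shows "stair_order n h a (\<lambda>l. of_bool (l \<in> T)) = (\<Prod>l\<in>{1..n}. falling (h l) (a l)) * (\<Prod>s\<in>T. h s - a s)"
proof -
  have "stair_order n h a (\<lambda>l. of_bool (l \<in> T)) = (\<Prod>l\<in>{1..n}. falling (h l) (a l + of_bool (l \<in> T)))"
    unfolding stair_order_def using fits by (intro prod.cong refl) (simp add: falling_eq_prod diff_diff_add)
  also have "\<dots> = (\<Prod>l\<in>{1..n}. falling (h l) (a l) * (if l \<in> T then h l - a l else 1))"
    by (intro prod.cong refl) (simp add: falling_Suc)
  also have "\<dots> = (\<Prod>l\<in>{1..n}. falling (h l) (a l)) * (\<Prod>s\<in>T. h s - a s)"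
    using T by (simp add: prod.distrib prod.If_cases Int_absorb1)
  finally show ?thesis .
qed

lemma stair_weight_eq_single:
  "stair_weight n (h, a, b) (xcols n a) =
     Poly_Mapping.single (mono_exp n (\<lambda>l. h l - a l - b l)) (of_int (stair_sign n h a * int (stair_order n h a b)))"
  unfolding stair_weight_def prod_X_power by (simp add: of_int_mult_single del: of_int_mult)

lemma circle_term:
  assumes ha: "(h, a) \<in> crossed_staircases n L S" and T: "T \<subseteq> {1..n}"
  shows "xdiff_mono (set_exp T) (Poly_Mapping.single (mono_exp n (\<lambda>l. h l - a l)) (of_int (cross_coeff n h a))) =
    (if \<forall>l\<in>{1..n}. a l + of_bool (l \<in> T) \<le> h l then stair_weight n (h, a, \<lambda>l. of_bool (l \<in> T)) S else 0)"
proof -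
  have fin: "finite T" using T finite_subset by blast
  have xc: "xcols n a = S" using ha unfolding crossed_staircases_def by simp
  have "xdiff_mono (set_exp T) (Poly_Mapping.single (mono_exp n (\<lambda>l. h l - a l)) (of_int (cross_coeff n h a))) =
      Poly_Mapping.single (mono_exp n (\<lambda>l. h l - a l) - set_exp T)
        (of_nat (\<Prod>s\<in>T. h s - a s) * of_int (cross_coeff n h a))"
  proof -
    have "(\<Prod>s\<in>T. Poly_Mapping.lookup (mono_exp n (\<lambda>l. h l - a l)) s) = (\<Prod>s\<in>T. h s - a s)"
      by (rule prod.cong) (use T in \<open>auto simp: lookup_mono_exp\<close>)
    then show ?thesis by (simp only: xdiff_mono_set_exp_single[OF fin])
  qed
  also have "\<dots> = (if \<forall>l\<in>{1..n}. a l + of_bool (l \<in> T) \<le> h l then stair_weight n (h, a, \<lambda>l. of_bool (l \<in> T)) S else 0)"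
  proof (cases "\<forall>l\<in>{1..n}. a l + of_bool (l \<in> T) \<le> h l")
    case True
    have "mono_exp n (\<lambda>l. h l - a l) - set_exp T = mono_exp n (\<lambda>l. h l - a l - of_bool (l \<in> T))"
      by (rule poly_mapping_eqI) (use T fin in \<open>auto simp: lookup_minus lookup_mono_exp lookup_set_exp\<close>)
    moreover have "stair_sign n h a = (-1) ^ inversions n h * cross_sign (xcols n a) a"
      unfolding stair_sign_def cross_sign_def ordered_pairs_def ..
    ultimately show ?thesis
      using True T unfolding xc[symmetric] stair_weight_eq_single
      by (simp add: stair_order_circles cross_coeff_def mult_ac)
  next
    case False
    then obtain l where l: "l \<in> {1..n}" "h l < a l + of_bool (l \<in> T)" by auto
    have "(\<Prod>s\<in>T. h s - a s) * cross_coeff n h a = 0"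
    proof (cases "h l < a l")
      case True
      then have "(\<Prod>l\<in>{1..n}. falling (h l) (a l)) = 0"
        using l(1) falling_eq_0[OF True] by (intro prod_zero) auto
      then show ?thesis by (simp add: cross_coeff_def)
    next
      case False
      then have "l \<in> T" "h l - a l = 0" using l(2) by (cases "l \<in> T"; simp)+
      then have "(\<Prod>s\<in>T. h s - a s) = 0" using fin by (intro prod_zero) auto
      then show ?thesis by simp
    qed
    then have "of_nat (\<Prod>s\<in>T. h s - a s) * (of_int (cross_coeff n h a) :: rat) = 0"
      by (metis of_int_0 of_int_mult of_int_of_nat_eq)
    then show ?thesis by (simp only: if_not_P[OF False] single_zero)
  qed
  finally show ?thesis .
qed

lemma circled_staircase_marked:
  assumes ha: "(h, a) \<in> crossed_staircases n L S" and T: "T \<subseteq> {1..n - m}"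
    and fits: "\<forall>l\<in>{1..n}. a l + of_bool (l \<in> T) \<le> h l"
  shows "(h, a, \<lambda>l. of_bool (l \<in> T)) \<in> marked_staircases n m"
  unfolding marked_staircases_def
proof (clarify, intro conjI)
  have h: "h \<in> staircases n" and a_out: "\<forall>l. l \<notin> {1..n} \<longrightarrow> a l = 0"
    using ha unfolding crossed_staircases_def by auto
  then show "bij_betw h {1..n} {0..<n}" unfolding staircases_def by simp
  have "{1..n - m} \<subseteq> {1..n}" by auto
  with T have "T \<subseteq> {1..n}" by (rule order_trans)
  then show "\<forall>l. l \<notin> {1..n} \<longrightarrow> h l = 0 \<and> a l = 0 \<and> (of_bool (l \<in> T) :: nat) = 0"
    using h a_out unfolding staircases_def by auto
  show "\<forall>l\<in>{1..n}. (of_bool (l \<in> T) :: nat) \<le> 1 \<and> a l + of_bool (l \<in> T) \<le> h l \<and>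
      (n - m < l \<longrightarrow> of_bool (l \<in> T) = 0)"
    using fits T by auto
qed

lemma marked_staircase_circles:
  assumes "(h, a, b) \<in> marked_staircases n m"
  shows "{l. b l = 1} \<subseteq> {1..n - m}" and "(\<lambda>l. of_bool (l \<in> {l. b l = 1})) = b"
proof
  fix l assume "l \<in> {l. b l = 1}"
  then have "b l \<noteq> 0" by simp
  then show "l \<in> {1..n - m}"
    using assms unfolding marked_staircases_def by (cases "l \<in> {1..n}") (auto simp: not_less)
next
  show "(\<lambda>l. of_bool (l \<in> {l. b l = 1})) = b"
  proof
    fix l show "of_bool (l \<in> {l. b l = 1}) = b l"
      using assms unfolding marked_staircases_def by (cases "l \<in> {1..n}") (auto simp: le_Suc_eq)
  qed
qed

lemma bij_betw_circles:
  "bij_betw (\<lambda>(T, h, a). (h, a, \<lambda>l. of_bool (l \<in> T)))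
     {(T, h, a) \<in> {T. T \<subseteq> {1..n - m} \<and> card T = r} \<times> crossed_staircases n L S.
        \<forall>l\<in>{1..n}. a l + of_bool (l \<in> T) \<le> h l}
     {(h, a, b) \<in> marked_staircases n m.
        (\<Sum>l\<in>{1..n}. b l) = r \<and> (h, a) \<in> crossed_staircases n L S}"
  (is "bij_betw ?f ?A ?B")
proof (rule bij_betw_byWitness[where f' = "\<lambda>(h, a, b). ({l. b l = 1}, h, a)"])
  have sum_of_bool: "(\<Sum>l\<in>{1..n}. of_bool (l \<in> T)) = card T" if "T \<subseteq> {1..n - m}" for T
  proof -
    have "{1..n - m} \<subseteq> {1..n}" by auto
    with that have "T \<subseteq> {1..n}" by (rule order_trans)
    then show ?thesis by (simp add: Int_absorb1)
  qed
  show "\<forall>x\<in>?A. (\<lambda>(h, a, b). ({l. b l = 1}, h, a)) (?f x) = x"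
    by auto
  show "\<forall>y\<in>?B. ?f ((\<lambda>(h, a, b). ({l. b l = 1}, h, a)) y) = y"
  proof
    fix y assume "y \<in> ?B"
    then obtain h a b where y: "y = (h, a, b)" and M: "(h, a, b) \<in> marked_staircases n m"
      by auto
    show "?f ((\<lambda>(h, a, b). ({l. b l = 1}, h, a)) y) = y"
      unfolding y using marked_staircase_circles(2)[OF M] by simp
  qed
  show "?f ` ?A \<subseteq> ?B"
  proof (rule image_subsetI)
    fix x assume "x \<in> ?A"
    then obtain T h a where x: "x = (T, h, a)" and T: "T \<subseteq> {1..n - m}" "card T = r"
      and ha: "(h, a) \<in> crossed_staircases n L S" and fits: "\<forall>l\<in>{1..n}. a l + of_bool (l \<in> T) \<le> h l"
      by auto
    have "(\<Sum>l\<in>{1..n}. of_bool (l \<in> T)) = r"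
      using sum_of_bool[OF T(1)] T(2) by (rule trans)
    then show "?f x \<in> ?B"
      unfolding x using circled_staircase_marked[OF ha T(1) fits] ha by simp
  qed
  show "(\<lambda>(h, a, b). ({l. b l = 1}, h, a)) ` ?B \<subseteq> ?A"
  proof (rule image_subsetI)
    fix y assume "y \<in> ?B"
    then obtain h a b where y: "y = (h, a, b)" and M: "(h, a, b) \<in> marked_staircases n m"
      and sum_b: "(\<Sum>l\<in>{1..n}. b l) = r" and ha: "(h, a) \<in> crossed_staircases n L S"
      by auto
    note T = marked_staircase_circles[OF M]
    have "card {l. b l = 1} = (\<Sum>l\<in>{1..n}. of_bool (l \<in> {l. b l = 1}))"
      by (rule sum_of_bool[OF T(1), symmetric])
    also have "\<dots> = r" unfolding T(2) by (rule sum_b)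
    finally have "card {l. b l = 1} = r" .
    moreover have "\<forall>l\<in>{1..n}. a l + of_bool (l \<in> {l. b l = 1}) \<le> h l"
      using M unfolding marked_staircases_def by (auto simp: of_bool_def)
    ultimately show "(\<lambda>(h, a, b). ({l. b l = 1}, h, a)) y \<in> ?A"
      unfolding y using T(1) ha by simp
  qed
qed

lemma xdiff_op_esym_cross_poly:
  "xdiff_op (esym r (n - m)) (cross_poly n L S) =
    (\<Sum>M\<in>{(h, a, b) \<in> marked_staircases n m. (\<Sum>l\<in>{1..n}. b l) = r \<and> (h, a) \<in> crossed_staircases n L S}.
       stair_weight n M S)"
proof -
  let ?C = "{T. T \<subseteq> {1..n - m} \<and> card T = r}"
  let ?fits = "\<lambda>(T, h, a). \<forall>l\<in>{1..n}. a l + of_bool (l \<in> T) \<le> h l"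
  let ?w = "\<lambda>(T, h, a). stair_weight n (h, a, \<lambda>l. of_bool (l \<in> T)) S"
  let ?g = "\<lambda>x. if ?fits x then ?w x else 0"
  have "finite ?C" by (rule finite_subset[of _ "Pow {1..n - m}"]) auto
  then have fin: "finite (?C \<times> crossed_staircases n L S)"
    by (simp add: finite_crossed_staircases)
  have "xdiff_op (esym r (n - m)) (cross_poly n L S) = (\<Sum>T\<in>?C. \<Sum>x\<in>crossed_staircases n L S. ?g (T, x))"
    unfolding xdiff_op_esym cross_poly_def additive.sum[OF additive_xdiff_mono]
  proof (intro sum.cong refl)
    fix T x assume T: "T \<in> ?C" and x: "x \<in> crossed_staircases n L S"
    obtain h a where ha: "x = (h, a)" by (cases x)
    have "T \<subseteq> {1..n - m}" using T by simp
    moreover have "{1..n - m} \<subseteq> {1..n}" by auto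
    ultimately have "T \<subseteq> {1..n}" by (rule order_trans)
    then show "xdiff_mono (set_exp T) (case x of (h, a) \<Rightarrow>
          Poly_Mapping.single (mono_exp n (\<lambda>l. h l - a l)) (of_int (cross_coeff n h a))) = ?g (T, x)"
      using circle_term[of h a n L S T] x unfolding ha by simp
  qed
  also have "\<dots> = (\<Sum>x\<in>?C \<times> crossed_staircases n L S. ?g x)"
    by (subst sum.cartesian_product) (auto intro!: sum.cong split: prod.splits)
  also have "\<dots> = (\<Sum>x\<in>{(T, h, a) \<in> ?C \<times> crossed_staircases n L S.
      \<forall>l\<in>{1..n}. a l + of_bool (l \<in> T) \<le> h l}. ?w x)"
    by (subst sum.inter_filter[OF fin, symmetric]) (rule sum.cong; auto)
  also have "\<dots> = (\<Sum>M\<in>{(h, a, b) \<in> marked_staircases n m. (\<Sum>l\<in>{1..n}. b l) = r \<and> (h, a) \<in> crossed_staircases n L S}.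
       stair_weight n M S)"
    using sum.reindex_bij_betw[OF bij_betw_circles[of n m r L S], of "\<lambda>M. stair_weight n M S"]
    by (simp add: case_prod_unfold)
  finally show ?thesis .
qed

lemma marked_staircase_crossed_iff:
  assumes "(h, a, b) \<in> marked_staircases n m"
  shows "(h, a) \<in> crossed_staircases n L S \<longleftrightarrow>
    xcols n a = S \<and> image_mset a (mset_set (xcols n a)) = mset_set (set L)"
  using assms
  by (auto simp: crossed_staircases_def marked_staircases_def staircases_def
      image_mset_mset_set_eq_iff[OF finite_xcols finite_set])

theorem lemma4p5:
  fixes n m r :: nat and I :: "nat set"
  assumes "I \<subseteq> {1..n-1}" and "m \<le> n"
  shows "sdiff_op (esym r (n - m))
           (foldr (dop n) (sorted_list_of_set I) (xpart (Delta n)))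
         = (\<lambda>S. \<Sum>M\<in>{(h, a, b) \<in> marked_staircases n m.
                      (\<Sum>l\<in>{1..n}. b l) = r \<and>
                      image_mset a (mset_set (xcols n a)) = mset_set I}.
                 stair_weight n M S)"
proof
  fix S
  let ?L = "sorted_list_of_set I"
  let ?M = "{(h, a, b) \<in> marked_staircases n m.
    (\<Sum>l\<in>{1..n}. b l) = r \<and> image_mset a (mset_set (xcols n a)) = mset_set I}"
  have I: "finite I" using assms(1) by (rule finite_subset) simp
  then have L: "set ?L = I" "sorted_wrt (<) ?L" "\<forall>x\<in>set ?L. 0 < x"
    using assms(1) by auto
  have "sdiff_op (esym r (n - m)) (foldr (dop n) ?L (xpart (Delta n))) S =
      xdiff_op (esym r (n - m)) (cross_poly n ?L S)"
    using L by (simp add: sdiff_op_def foldr_dop_Delta)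
  also have "\<dots> = (\<Sum>M\<in>{(h, a, b) \<in> marked_staircases n m.
      (\<Sum>l\<in>{1..n}. b l) = r \<and> (h, a) \<in> crossed_staircases n ?L S}. stair_weight n M S)"
    by (rule xdiff_op_esym_cross_poly)
  also have "{(h, a, b) \<in> marked_staircases n m. (\<Sum>l\<in>{1..n}. b l) = r \<and> (h, a) \<in> crossed_staircases n ?L S}
      = {(h, a, b) \<in> ?M. xcols n a = S}"
    using marked_staircase_crossed_iff L(1) by auto
  also have "(\<Sum>M\<in>{(h, a, b) \<in> ?M. xcols n a = S}. stair_weight n M S) = (\<Sum>M\<in>?M. stair_weight n M S)"
    by (rule sum.mono_neutral_left)
       (auto simp: stair_weight_def split: if_splits intro: finite_subset[OF _ finite_marked_staircases])
  finally show "sdiff_op (esym r (n - m)) (foldr (dop n) ?L (xpart (Delta n))) S = (\<Sum>M\<in>?M. stair_weight n M S)" .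
qed

end
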